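(* Let $L$ be the unnormalized Laplacian of a simple undirected network with $M$ edges, with simple eigenvalues $\lambda_1,\dots,\lambda_N$ and orthonormal eigenvectors $\bm v^{(1)},\dots,\bm v^{(N)}$. Suppose the network is modified by adding a set of edges $\mathcal{E}^+$ and removing a set of edges $\mathcal{E}^-$, encoded by $\Delta L=\sum_{(p,q)\in\mathcal{E}^+}\Delta L^{(pq)}-\sum_{(p,q)\in\mathcal{E}^-}\Delta L^{(pq)}$, where $\Delta L^{(pq)}$ has entries $\Delta L^{(pq)}_{pp}=\Delta L^{(pq)}_{qq}=1$, $\Delta L^{(pq)}_{pq}=\Delta L^{(pq)}_{qp}=-1$, and $0$ elsewhere. Let $L(\epsilon)=L+\epsilon\,\Delta L$, assume its eigenvalues $\lambda_i(\epsilon)$ are simple, and let $h(\epsilon)=-\sum_i\frac{\lambda_i(\epsilon)}{2M}\log_2\frac{\lambda_i(\epsilon)}{2M}$. Then $h(\epsilon)=h(0)+\epsilon h'(0)+\mathcal{O}(\epsilon^2)$ with $$h'(0)=-\frac{1}{2M}\sum_{i=1}^N\left(\sum_{(p,q)\in\mathcal{E}^+}(\bm v^{(i)}_p-\bm v^{(i)}_q)^2-\sum_{(p,q)\in\mathcal{E}^-}(\bm v^{(i)}_p-\bm v^{(i)}_q)^2\right)\left(\log_2\frac{\lambda_i}{2M}+\frac{1}{\ln 2}\right).$$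
   Context: For a simple undirected unweighted network with adjacency matrix $A$ and degree matrix $D$, the unnormalized Laplacian is $L=D-A$. The von Neumann entropy of a network with $M$ edges and Laplacian eigenvalues $\lambda_i$ is $-\sum_i\frac{\lambda_i}{2M}\log_2\frac{\lambda_i}{2M}$ with $0\log_2 0=0$. *)

theory Defs
  imports "HOL-Analysis.Analysis" "HOL-Library.Landau_Symbols"
begin

definition simple_graph :: "('n \<Rightarrow> 'n \<Rightarrow> bool) \<Rightarrow> bool" where
  "simple_graph E \<longleftrightarrow> (\<forall>i j. E i j \<longrightarrow> E j i) \<and> (\<forall>i. \<not> E i i)"

definition num_edges :: "('n \<Rightarrow> 'n \<Rightarrow> bool) \<Rightarrow> nat" where
  "num_edges E = card {{p, q} | p q. E p q}"

definition degree :: "('n::finite \<Rightarrow> 'n \<Rightarrow> bool) \<Rightarrow> 'n \<Rightarrow> nat" where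
  "degree E i = card {j. E i j}"

definition laplacian :: "('n::finite \<Rightarrow> 'n \<Rightarrow> bool) \<Rightarrow> real^'n^'n" where
  "laplacian E = (\<chi> i j. (if i = j then real (degree E i) else 0) - (if E i j then 1 else 0))"

definition deltaL :: "'n::finite \<Rightarrow> 'n \<Rightarrow> real^'n^'n" where
  "deltaL p q = (\<chi> i j. if (i = p \<and> j = p) \<or> (i = q \<and> j = q) then 1
                        else if (i = p \<and> j = q) \<or> (i = q \<and> j = p) then -1 else 0)"

definition eigvals :: "real^'n^'n \<Rightarrow> real set" where
  "eigvals A = {\<mu>. \<exists>x. x \<noteq> 0 \<and> A *v x = \<mu> *\<^sub>R x}"

definition vn_term :: "nat \<Rightarrow> real \<Rightarrow> real" where
  "vn_term M x = (if x = 0 then 0 else (x / (2 * real M)) * log 2 (x / (2 * real M)))"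

text \<open>Von Neumann entropy of a matrix with simple spectrum (each eigenvalue counted once),
normalized by 2M.\<close>
definition vn_entropy :: "nat \<Rightarrow> real^'n^'n \<Rightarrow> real" where
  "vn_entropy M A = - (\<Sum>\<mu>\<in>eigvals A. vn_term M \<mu>)"

end

theory Submission
  imports Defs
begin

text \<open>For small \<open>\<epsilon>\<close>, expanding a unit eigenvector \<open>x\<close> of \<open>L + \<epsilon> \<Delta>L\<close> with eigenvalue \<open>\<mu>\<close> in
  the eigenbasis \<open>v\<close> gives \<open>\<Sum>\<^sub>j \<langle>x, v\<^sub>j\<rangle>\<^sup>2 (\<mu> - \<lambda>\<^sub>j)\<^sup>2 \<le> \<epsilon>\<^sup>2 \<parallel>\<Delta>L\<parallel>\<^sup>2\<close>. Hence \<open>\<mu>\<close> lies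
  within \<open>\<epsilon> \<parallel>\<Delta>L\<parallel>\<close> of exactly one \<open>\<lambda>\<^sub>i\<close>, \<open>x\<close> is concentrated on \<open>v\<^sub>i\<close>, and
  \<open>\<mu> = \<lambda>\<^sub>i + \<epsilon> \<langle>\<Delta>L v\<^sub>i, v\<^sub>i\<rangle> + O(\<epsilon>\<^sup>2)\<close>; since the perturbed spectrum is still simple,
  this matches the two spectra bijectively. The entropy summand \<open>t log t\<close> has an explicit
  quadratic remainder away from 0, and the eigenvalue 0 needs no smoothness: the constant vector
  lies in the kernel of both \<open>L\<close> and \<open>\<Delta>L\<close>, so 0 stays an eigenvalue and its first-order shift
  vanishes.\<close>

lemma orthonormal_family_expansion:
  fixes v :: "'n::finite \<Rightarrow> real^'n"
  assumes orth: "\<And>i j. v i \<bullet> v j = (if i = j then 1 else 0)"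
  shows "(\<Sum>i\<in>UNIV. (x \<bullet> v i) *\<^sub>R v i) = x"
proof -
  have inj: "inj v" by (metis inj_on_def orth zero_neq_one)
  let ?B = "range v"
  have pairwise: "pairwise orthogonal ?B" using orth unfolding pairwise_def orthogonal_def
    by (metis (no_types, lifting) imageE)
  have unit: "\<And>b. b \<in> ?B \<Longrightarrow> norm b = 1" using orth by (auto simp: norm_eq_sqrt_inner)
  have "independent ?B"
    by (rule pairwise_orthogonal_independent[OF pairwise]) (use unit in fastforce)
  moreover have "card ?B = CARD('n)" using inj by (simp add: card_image)
  ultimately have "UNIV \<subseteq> span ?B"
    by (intro card_ge_dim_independent) auto
  then have "(\<Sum>b\<in>?B. (x \<bullet> b) *\<^sub>R b) = x"
    using orthonormal_basis_expand[OF pairwise unit] by auto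
  then show ?thesis using inj by (simp add: sum.reindex)
qed

lemma orthonormal_family_parseval:
  fixes v :: "'n::finite \<Rightarrow> real^'n"
  assumes orth: "\<And>i j. v i \<bullet> v j = (if i = j then 1 else 0)"
  shows "(\<Sum>i\<in>UNIV. (x \<bullet> v i)^2) = (norm x)^2"
proof -
  have "(\<Sum>i\<in>UNIV. (x \<bullet> v i)^2) = x \<bullet> (\<Sum>i\<in>UNIV. (x \<bullet> v i) *\<^sub>R v i)"
    by (simp add: inner_sum_right power2_eq_square)
  also have "\<dots> = (norm x)^2"
    by (simp add: orthonormal_family_expansion[OF orth] power2_norm_eq_inner)
  finally show ?thesis .
qed

lemma norm_orthogonal_component:
  assumes "norm x = 1" "norm u = 1"
  shows "(norm (x - (x \<bullet> u) *\<^sub>R u))^2 = 1 - (x \<bullet> u)^2"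
proof -
  have "u \<bullet> u = 1" "x \<bullet> x = 1" using assms by (simp_all add: norm_eq_1)
  then show ?thesis unfolding power2_norm_eq_inner
    by (simp add: inner_diff_left inner_diff_right inner_commute power2_eq_square)
qed

lemma transpose_zero: "transpose 0 = 0"
  by (simp add: transpose_def vec_eq_iff)

lemma transpose_add: "transpose (A + B) = transpose A + transpose B"
  by (simp add: transpose_def vec_eq_iff)

lemma transpose_diff: "transpose (A - B) = transpose A - transpose B"
  by (simp add: transpose_def vec_eq_iff)

lemma transpose_sum: "transpose (sum f S) = (\<Sum>a\<in>S. transpose (f a))"
  by (induction S rule: infinite_finite_induct) (simp_all add: transpose_zero transpose_add)

lemma symmetric_matrix_inner:
  fixes A :: "real^'n::finite^'n"
  assumes "transpose A = A"
  shows "(A *v x) \<bullet> y = x \<bullet> (A *v y)"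
  by (metis assms dot_lmul_matrix inner_commute vector_transpose_matrix)

lemma scaleR_matrix_vector_mult: "(c *\<^sub>R A) *v x = c *\<^sub>R (A *v x)"
  for A :: "real^'n::finite^'m"
  by (simp add: vec_eq_iff matrix_vector_mult_def sum_distrib_left algebra_simps)

lemma sum_matrix_vector_mult: "(sum f S) *v x = (\<Sum>a\<in>S. f a *v x)"
  for f :: "'a \<Rightarrow> real^'n::finite^'m"
  by (induction S rule: infinite_finite_induct) (auto simp: matrix_vector_mult_add_rdistrib)

lemma eigvals_unit_eigenvector:
  assumes "\<mu> \<in> eigvals A"
  obtains x where "norm x = 1" "A *v x = \<mu> *\<^sub>R x"
proof -
  obtain x where x: "x \<noteq> 0" "A *v x = \<mu> *\<^sub>R x" using assms by (auto simp: eigvals_def)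
  then have "A *v ((1 / norm x) *\<^sub>R x) = \<mu> *\<^sub>R ((1 / norm x) *\<^sub>R x)"
    by (simp add: matrix_vector_mult_scaleR)
  with x(1) show thesis by (intro that[of "(1 / norm x) *\<^sub>R x"]) simp_all
qed

lemma transpose_laplacian:
  assumes "symp E"
  shows "transpose (laplacian E) = laplacian E"
proof -
  have "E i j = E j i" for i j using assms by (blast dest: sympD)
  then show ?thesis by (simp add: transpose_def laplacian_def vec_eq_iff)
qed

lemma laplacian_mult_ones: "laplacian E *v (\<chi> i. 1) = 0"
proof -
  have "(laplacian E *v (\<chi> i. 1)) $ i = 0" for i
  proof -
    have "(laplacian E *v (\<chi> i. 1)) $ i
        = (\<Sum>j\<in>UNIV. (if i = j then real (degree E i) else 0) - (if E i j then 1 else 0))"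
      by (simp add: matrix_vector_mult_def laplacian_def)
    also have "\<dots> = real (degree E i) - real (card {j. E i j})"
      by (simp add: sum_subtractf sum.If_cases)
    finally show ?thesis by (simp add: degree_def)
  qed
  then show ?thesis by (simp add: vec_eq_iff)
qed

lemma transpose_deltaL: "transpose (deltaL p q) = deltaL p q"
proof -
  have "(j = p \<and> i = p \<or> j = q \<and> i = q) \<longleftrightarrow> (i = p \<and> j = p \<or> i = q \<and> j = q)"
    "(j = p \<and> i = q \<or> j = q \<and> i = p) \<longleftrightarrow> (i = p \<and> j = q \<or> i = q \<and> j = p)" for i j
    by blast+
  then show ?thesis unfolding transpose_def deltaL_def vec_eq_iff vec_lambda_beta by presburger
qed

lemma deltaL_mult_vector:
  assumes "p \<noteq> q"
  shows "deltaL p q *v x = (\<chi> i. if i = p then x$p - x$q else if i = q then x$q - x$p else 0)"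
proof -
  have "(deltaL p q *v x) $ i = (\<Sum>j\<in>UNIV.
          if i = p then (if j = p then x$p else 0) - (if j = q then x$q else 0)
          else if i = q then (if j = q then x$q else 0) - (if j = p then x$p else 0) else 0)" for i
    unfolding matrix_vector_mult_def vec_lambda_beta
    by (rule sum.cong) (use assms in \<open>auto simp: deltaL_def\<close>)
  then show ?thesis by (simp add: vec_eq_iff sum_subtractf)
qed

lemma deltaL_sum_mult_ones:
  assumes "\<And>p q. (p, q) \<in> P \<Longrightarrow> p \<noteq> q"
  shows "(\<Sum>(p,q)\<in>P. deltaL p q) *v (\<chi> i. 1) = 0"
  unfolding sum_matrix_vector_mult
  by (rule sum.neutral) (auto dest: assms simp: deltaL_mult_vector vec_eq_iff)

lemma deltaL_sum_quadratic_form: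
  assumes "\<And>p q. (p, q) \<in> P \<Longrightarrow> p \<noteq> q"
  shows "((\<Sum>(p,q)\<in>P. deltaL p q) *v x) \<bullet> x = (\<Sum>(p,q)\<in>P. (x$p - x$q)^2)"
proof -
  have "(deltaL p q *v x) \<bullet> x = (x$p - x$q)^2" if "p \<noteq> q" for p q
  proof -
    have "(deltaL p q *v x) \<bullet> x = (\<Sum>i\<in>UNIV.
            (if i = p then (x$p - x$q) * x$p else 0) + (if i = q then (x$q - x$p) * x$q else 0))"
      unfolding deltaL_mult_vector[OF that] inner_vec_def by (rule sum.cong) (use that in auto)
    also have "\<dots> = (x$p - x$q)^2" by (simp add: sum.distrib power2_eq_square algebra_simps)
    finally show ?thesis .
  qed
  then show ?thesis
    unfolding sum_matrix_vector_mult inner_sum_left by (intro sum.cong) (auto dest: assms)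
qed

definition vn_term_deriv :: "nat \<Rightarrow> real \<Rightarrow> real" where
  "vn_term_deriv M y = (1 / (2 * real M)) * (log 2 (y / (2 * real M)) + 1 / ln 2)"

lemma xlnx_bounds:
  fixes t :: real
  assumes "t > 0"
  shows "0 \<le> t * ln t - t + 1" "t * ln t - t + 1 \<le> (t - 1)^2"
proof -
  have "- ln t \<le> inverse t - 1"
    using ln_le_minus_one[of "inverse t"] assms by (simp add: ln_inverse)
  then have "t * (- ln t) \<le> t * (inverse t - 1)" using assms by (intro mult_left_mono) auto
  then show "0 \<le> t * ln t - t + 1" using assms by (simp add: algebra_simps)
  have "t * ln t \<le> t * (t - 1)" using ln_le_minus_one[OF assms] assms by (intro mult_left_mono) auto
  then show "t * ln t - t + 1 \<le> (t - 1)^2" by (simp add: power2_eq_square algebra_simps)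
qed

lemma vn_term_linear_approx:
  assumes M: "M > 0" and xy: "x * y > 0"
  shows "\<bar>vn_term M x - vn_term M y - vn_term_deriv M y * (x - y)\<bar>
         \<le> (x - y)^2 / (2 * real M * ln 2 * \<bar>y\<bar>)"
proof -
  define C where "C = 2 * real M"
  define t where "t = x / y"
  have C: "C > 0" using M by (simp add: C_def)
  have "x \<noteq> 0" "y \<noteq> 0" using xy by auto
  have t: "t > 0" using xy by (simp add: t_def zero_less_divide_iff zero_less_mult_iff)
  have x: "x = t * y" using \<open>y \<noteq> 0\<close> by (simp add: t_def)
  have ln_x: "ln (x / C) = ln t + ln (y / C)"
    using \<open>x \<noteq> 0\<close> \<open>y \<noteq> 0\<close> C t by (simp add: ln_div t_def)
  have linear_combination: "(x / C) * (a / l) - (y / C) * (b / l) - (1 / C) * (b / l + 1 / l) * (x - y)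
      = (x * a - y * b - (b + 1) * (x - y)) / (C * l)" if "l > 0" for a b l :: real
    using C that by (simp add: field_simps)
  have "vn_term M x - vn_term M y - vn_term_deriv M y * (x - y)
      = (x * ln (x / C) - y * ln (y / C) - (ln (y / C) + 1) * (x - y)) / (C * ln 2)"
    using \<open>x \<noteq> 0\<close> \<open>y \<noteq> 0\<close>
    by (simp only: vn_term_def vn_term_deriv_def C_def[symmetric] log_def if_False
        linear_combination[OF ln_gt_zero] one_less_numeral_iff semiring_norm(76))
  also have "\<dots> = y * (t * ln t - t + 1) / (C * ln 2)"
    unfolding ln_x by (subst x)+ (simp add: algebra_simps)
  finally have "\<bar>vn_term M x - vn_term M y - vn_term_deriv M y * (x - y)\<bar>
      = \<bar>y\<bar> * (t * ln t - t + 1) / (C * ln 2)"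
    using xlnx_bounds(1)[OF t] C by (simp add: abs_mult abs_divide)
  also have "\<dots> \<le> \<bar>y\<bar> * (t - 1)^2 / (C * ln 2)"
    using xlnx_bounds(2)[OF t] C by (intro divide_right_mono mult_left_mono) auto
  also have "\<bar>y\<bar> * (t - 1)^2 = (x - y)^2 / \<bar>y\<bar>"
    unfolding t_def using \<open>y \<noteq> 0\<close> by (cases "y > 0") (simp_all add: power2_eq_square field_simps)
  finally show ?thesis by (simp add: C_def mult_ac)
qed

lemma mult_pos_if_abs_diff_less:
  fixes x y :: real
  assumes "\<bar>x - y\<bar> < \<bar>y\<bar>"
  shows "x * y > 0"
proof -
  have "\<bar>x - y\<bar> * \<bar>y\<bar> < \<bar>y\<bar> * \<bar>y\<bar>"
    using assms by (intro mult_strict_right_mono) auto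
  then have "\<bar>(x - y) * y\<bar> < y * y" by (simp add: abs_mult abs_mult_self_eq)
  moreover have "x * y = (x - y) * y + y * y" by (simp add: algebra_simps)
  ultimately show ?thesis by (simp add: abs_less_iff)
qed

locale symmetric_perturbation =
  fixes L D :: "real^'n::finite^'n" and lam :: "'n \<Rightarrow> real" and v :: "'n \<Rightarrow> real^'n"
  assumes L_symmetric: "transpose L = L" and D_symmetric: "transpose D = D"
    and eigenpair: "\<And>i. L *v v i = lam i *\<^sub>R v i"
    and orthonormal: "\<And>i j. v i \<bullet> v j = (if i = j then 1 else 0)"
    and simple: "inj lam"
begin

definition perturbed :: "real \<Rightarrow> real^'n^'n" where
  "perturbed e = L + e *\<^sub>R D"

definition K :: real where
  "K = onorm (\<lambda>x. D *v x) + 1"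

text \<open>The \<open>1\<close> only keeps the minimum well defined when there are no gaps.\<close>
definition sep :: real where
  "sep = Min (insert 1 {\<bar>a - b\<bar> | a b. a \<in> insert 0 (range lam) \<and> b \<in> insert 0 (range lam) \<and> a \<noteq> b})"

definition shift :: "'n \<Rightarrow> real" where
  "shift i = (D *v v i) \<bullet> v i"

lemma norm_v: "norm (v i) = 1"
  using orthonormal by (simp add: norm_eq_sqrt_inner)

lemma v_nonzero: "v i \<noteq> 0"
  using norm_v[of i] by auto

lemma K_pos: "K > 0"
  unfolding K_def using onorm_pos_le[OF matrix_vector_mul_bounded_linear[of D]] by linarith

lemma norm_D_le: "norm (D *v x) \<le> K * norm x"
proof -
  have "norm (D *v x) \<le> onorm (\<lambda>x. D *v x) * norm x"
    by (rule onorm[OF matrix_vector_mul_bounded_linear])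
  also have "\<dots> \<le> K * norm x" unfolding K_def by (simp add: mult_right_mono)
  finally show ?thesis .
qed

lemma finite_eigval_gaps:
  "finite {\<bar>a - b\<bar> | a b. a \<in> insert 0 (range lam) \<and> b \<in> insert 0 (range lam) \<and> a \<noteq> b}"
  by (rule finite_subset[of _ "(\<lambda>(a, b). \<bar>a - b\<bar>) ` (insert 0 (range lam) \<times> insert 0 (range lam))"])
    auto

lemma sep_pos: "sep > 0"
  unfolding sep_def using finite_eigval_gaps by auto

lemma sep_le:
  assumes "a \<in> insert 0 (range lam)" "b \<in> insert 0 (range lam)" "a \<noteq> b"
  shows "sep \<le> \<bar>a - b\<bar>"
  unfolding sep_def using finite_eigval_gaps assms by (intro Min_le) auto

lemma sep_le_eigval_diff: "i \<noteq> j \<Longrightarrow> sep \<le> \<bar>lam i - lam j\<bar>"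
  using simple by (intro sep_le) (auto simp: inj_eq)

lemma sep_le_eigval: "lam i \<noteq> 0 \<Longrightarrow> sep \<le> \<bar>lam i\<bar>"
  using sep_le[of "lam i" 0] by auto

lemma perturbed_symmetric: "transpose (perturbed e) = perturbed e"
  by (simp add: perturbed_def transpose_add transpose_scalar L_symmetric D_symmetric)

lemma perturbed_eigvec_coeff:
  assumes "perturbed e *v x = \<mu> *\<^sub>R x"
  shows "(x \<bullet> v i) * (\<mu> - lam i) = e * ((D *v x) \<bullet> v i)"
proof -
  have "\<mu> * (x \<bullet> v i) = (perturbed e *v x) \<bullet> v i" using assms by simp
  also have "\<dots> = (L *v x) \<bullet> v i + e * ((D *v x) \<bullet> v i)"
    by (simp add: perturbed_def matrix_vector_mult_add_rdistrib scaleR_matrix_vector_mult inner_add_left)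
  also have "(L *v x) \<bullet> v i = lam i * (x \<bullet> v i)"
    by (simp add: symmetric_matrix_inner[OF L_symmetric] eigenpair)
  finally show ?thesis by (simp add: algebra_simps)
qed

lemma perturbed_eigvec_spread:
  assumes "perturbed e *v x = \<mu> *\<^sub>R x" "norm x = 1"
  shows "(\<Sum>j\<in>UNIV. (x \<bullet> v j)^2 * (\<mu> - lam j)^2) \<le> e^2 * K^2"
proof -
  have "(x \<bullet> v j)^2 * (\<mu> - lam j)^2 = e^2 * ((D *v x) \<bullet> v j)^2" for j
    by (simp only: perturbed_eigvec_coeff[OF assms(1)] flip: power_mult_distrib)
  then have "(\<Sum>j\<in>UNIV. (x \<bullet> v j)^2 * (\<mu> - lam j)^2) = e^2 * (\<Sum>j\<in>UNIV. ((D *v x) \<bullet> v j)^2)"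
    by (simp add: sum_distrib_left)
  also have "\<dots> = e^2 * (norm (D *v x))^2"
    by (simp add: orthonormal_family_parseval[OF orthonormal])
  also have "\<dots> \<le> e^2 * K^2"
    using norm_D_le[of x] assms(2) by (intro mult_left_mono power_mono) auto
  finally show ?thesis .
qed

lemma perturbed_eigval_near:
  assumes "perturbed e *v x = \<mu> *\<^sub>R x" "norm x = 1"
  obtains i where "\<bar>\<mu> - lam i\<bar> \<le> \<bar>e\<bar> * K"
proof -
  define i where "i = arg_min_on (\<lambda>j. (\<mu> - lam j)^2) UNIV"
  have i: "(\<mu> - lam i)^2 \<le> (\<mu> - lam j)^2" for j
    unfolding i_def by (rule arg_min_least) auto
  have "(\<mu> - lam i)^2 = (\<Sum>j\<in>UNIV. (x \<bullet> v j)^2 * (\<mu> - lam i)^2)"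
    using orthonormal_family_parseval[OF orthonormal, of x] assms(2) by (simp add: sum_distrib_right[symmetric])
  also have "\<dots> \<le> (\<Sum>j\<in>UNIV. (x \<bullet> v j)^2 * (\<mu> - lam j)^2)"
    by (intro sum_mono mult_left_mono i) auto
  also have "\<dots> \<le> (\<bar>e\<bar> * K)^2"
    using perturbed_eigvec_spread[OF assms] by (simp add: power_mult_distrib)
  finally have "\<bar>\<mu> - lam i\<bar> \<le> \<bar>e\<bar> * K"
    using power2_le_iff_abs_le[of "\<bar>e\<bar> * K" "\<mu> - lam i"] K_pos by simp
  then show thesis by (rule that)
qed

lemma perturbed_eigvec_concentrated:
  assumes ev: "perturbed e *v x = \<mu> *\<^sub>R x" and x: "norm x = 1"
    and near: "\<bar>\<mu> - lam i\<bar> \<le> \<bar>e\<bar> * K" and small: "\<bar>e\<bar> * K \<le> sep / 2"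
  shows "sep^2 * (1 - (x \<bullet> v i)^2) \<le> 4 * e^2 * K^2"
proof -
  have far: "(sep / 2)^2 \<le> (\<mu> - lam j)^2" if "j \<noteq> i" for j
  proof -
    have "sep / 2 \<le> \<bar>\<mu> - lam j\<bar>"
      using sep_le_eigval_diff[OF that] near small by linarith
    then show ?thesis using power2_le_iff_abs_le[of "\<bar>\<mu> - lam j\<bar>" "sep / 2"] sep_pos by simp
  qed
  have "(\<Sum>j\<in>UNIV - {i}. (x \<bullet> v j)^2) = 1 - (x \<bullet> v i)^2"
    using orthonormal_family_parseval[OF orthonormal, of x] x sum.remove[of UNIV i "\<lambda>j. (x \<bullet> v j)^2"]
    by simp
  then have "(sep / 2)^2 * (1 - (x \<bullet> v i)^2) = (\<Sum>j\<in>UNIV - {i}. (x \<bullet> v j)^2 * (sep / 2)^2)"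
    by (metis mult.commute sum_distrib_right)
  also have "\<dots> \<le> (\<Sum>j\<in>UNIV - {i}. (x \<bullet> v j)^2 * (\<mu> - lam j)^2)"
    by (intro sum_mono mult_left_mono far) auto
  also have "\<dots> \<le> (\<Sum>j\<in>UNIV. (x \<bullet> v j)^2 * (\<mu> - lam j)^2)"
    by (intro sum_mono2) auto
  also have "\<dots> \<le> e^2 * K^2" by (rule perturbed_eigvec_spread[OF ev x])
  finally show ?thesis by (simp add: power_divide)
qed

lemma perturbed_eigvec_aligned:
  assumes "perturbed e *v x = \<mu> *\<^sub>R x" "norm x = 1"
    and "\<bar>\<mu> - lam i\<bar> \<le> \<bar>e\<bar> * K" and small: "\<bar>e\<bar> * K \<le> sep / 4"
  shows "1 - (x \<bullet> v i)^2 \<le> 1 / 4"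
proof -
  have "sep^2 * (1 - (x \<bullet> v i)^2) \<le> 4 * (\<bar>e\<bar> * K)^2"
    using perturbed_eigvec_concentrated[OF assms(1-3)] small sep_pos by (simp add: power_mult_distrib)
  also have "\<dots> \<le> 4 * (sep / 4)^2"
    using small K_pos by (intro mult_left_mono power_mono) auto
  finally show ?thesis using sep_pos by (simp add: power_divide field_simps)
qed

lemma perturbed_eigval_first_order:
  assumes ev: "perturbed e *v x = \<mu> *\<^sub>R x" and x: "norm x = 1"
    and near: "\<bar>\<mu> - lam i\<bar> \<le> \<bar>e\<bar> * K" and small: "\<bar>e\<bar> * K \<le> sep / 4"
  shows "\<bar>\<mu> - lam i - e * shift i\<bar> \<le> 3 * e^2 * K^2 / sep"
proof -
  define c where "c = x \<bullet> v i"
  define r where "r = x - c *\<^sub>R v i"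
  define \<delta> where "\<delta> = \<mu> - lam i - e * shift i"
  define a where "a = e^2 * K^2 / sep"
  have deviation: "1 - c^2 \<le> 4 * e^2 * K^2 / sep^2"
    using perturbed_eigvec_concentrated[OF ev x near] small sep_pos by (simp add: c_def field_simps)
  have aligned: "1 / 2 \<le> c^2"
    using perturbed_eigvec_aligned[OF ev x near small] by (simp add: c_def)
  have "(D *v x) \<bullet> v i = c * shift i + (D *v r) \<bullet> v i"
    by (simp add: r_def shift_def matrix_vector_mult_diff_distrib matrix_vector_mult_scaleR
        inner_diff_left)
  then have "c * \<delta> = e * ((D *v r) \<bullet> v i)"
    using perturbed_eigvec_coeff[OF ev, of i] by (simp add: c_def \<delta>_def algebra_simps)
  then have "c^2 * \<delta>^2 = e^2 * ((D *v r) \<bullet> v i)^2"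
    by (metis power_mult_distrib)
  also have "\<dots> \<le> e^2 * (K^2 * (1 - c^2))"
  proof -
    have "\<bar>(D *v r) \<bullet> v i\<bar> \<le> K * norm r"
      using Cauchy_Schwarz_ineq2[of "D *v r" "v i"] norm_D_le[of r] norm_v by simp
    then have "((D *v r) \<bullet> v i)^2 \<le> K^2 * (norm r)^2"
      using power2_le_iff_abs_le[of "K * norm r" "(D *v r) \<bullet> v i"] K_pos by (simp add: power_mult_distrib)
    then show ?thesis
      using norm_orthogonal_component[OF x norm_v, of i] by (simp add: r_def c_def mult_left_mono)
  qed
  also have "\<dots> \<le> e^2 * (K^2 * (4 * e^2 * K^2 / sep^2))"
    by (intro mult_left_mono deviation) auto
  also have "\<dots> = 4 * a^2"
    using sep_pos by (simp add: a_def power2_eq_square field_simps)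
  finally have "(1 / 2) * \<delta>^2 \<le> 4 * a^2"
    using mult_right_mono[OF aligned zero_le_power2[of \<delta>]] by linarith
  then have "\<delta>^2 \<le> (3 * a)^2"
    by (simp add: power_mult_distrib) (use zero_le_power2[of a] in linarith)
  then have "\<bar>\<delta>\<bar> \<le> 3 * a"
    using power2_le_iff_abs_le[of "3 * a" \<delta>] sep_pos by (simp add: a_def)
  then show ?thesis by (simp add: \<delta>_def a_def)
qed

lemma perturbed_eigval_unique:
  assumes \<mu>: "\<mu> \<in> eigvals (perturbed e)" "\<bar>\<mu> - lam i\<bar> \<le> \<bar>e\<bar> * K"
    and \<mu>': "\<mu>' \<in> eigvals (perturbed e)" "\<bar>\<mu>' - lam i\<bar> \<le> \<bar>e\<bar> * K"
    and small: "\<bar>e\<bar> * K \<le> sep / 4"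
  shows "\<mu> = \<mu>'"
proof (rule ccontr)
  assume "\<mu> \<noteq> \<mu>'"
  obtain x where x: "norm x = 1" "perturbed e *v x = \<mu> *\<^sub>R x"
    using eigvals_unit_eigenvector[OF \<mu>(1)] .
  obtain x' where x': "norm x' = 1" "perturbed e *v x' = \<mu>' *\<^sub>R x'"
    using eigvals_unit_eigenvector[OF \<mu>'(1)] .
  define c where "c = x \<bullet> v i"
  define c' where "c' = x' \<bullet> v i"
  define r where "r = x - c *\<^sub>R v i"
  define r' where "r' = x' - c' *\<^sub>R v i"
  have "\<mu> * (x \<bullet> x') = \<mu>' * (x \<bullet> x')"
    using symmetric_matrix_inner[OF perturbed_symmetric, of e x x'] x(2) x'(2) by simp
  then have "x \<bullet> x' = 0" using \<open>\<mu> \<noteq> \<mu>'\<close> by simp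
  moreover have "x \<bullet> x' = c * c' + r \<bullet> r'"
    using orthonormal[of i i]
    by (simp add: r_def r'_def c_def c'_def inner_diff_left inner_diff_right inner_commute)
  ultimately have "c * c' = - (r \<bullet> r')" by simp
  then have "(c * c')^2 = (r \<bullet> r')^2" by simp
  also have "\<dots> \<le> (norm r)^2 * (norm r')^2"
    using Cauchy_Schwarz_ineq2[of r r'] power2_le_iff_abs_le[of "norm r * norm r'" "r \<bullet> r'"]
    by (simp add: power_mult_distrib)
  also have "\<dots> \<le> (1/4) * (1/4)"
  proof -
    have "(norm r)^2 \<le> 1/4" "(norm r')^2 \<le> 1/4"
      using perturbed_eigvec_aligned[OF x(2) x(1) \<mu>(2) small] perturbed_eigvec_aligned[OF x'(2) x'(1) \<mu>'(2) small]
        norm_orthogonal_component[OF x(1) norm_v] norm_orthogonal_component[OF x'(1) norm_v]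
      by (simp_all add: r_def r'_def c_def c'_def)
    then show ?thesis by (intro mult_mono) auto
  qed
  finally have "c^2 * c'^2 \<le> 1/16" by (simp add: power_mult_distrib)
  moreover have "(3/4) * (3/4) \<le> c^2 * c'^2"
    using perturbed_eigvec_aligned[OF x(2) x(1) \<mu>(2) small] perturbed_eigvec_aligned[OF x'(2) x'(1) \<mu>'(2) small]
    by (intro mult_mono) (simp_all add: c_def c'_def)
  ultimately show False by simp
qed

lemma perturbed_eigvals_matching:
  assumes small: "\<bar>e\<bar> * K \<le> sep / 4"
    and card: "card (eigvals (perturbed e)) = CARD('n)"
  obtains g where "bij_betw g (eigvals (perturbed e)) UNIV"
    and "\<And>\<mu>. \<mu> \<in> eigvals (perturbed e) \<Longrightarrow> \<bar>\<mu> - lam (g \<mu>)\<bar> \<le> \<bar>e\<bar> * K"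
proof -
  define S where "S = eigvals (perturbed e)"
  have index_unique: "i = j" if "\<bar>\<mu> - lam i\<bar> \<le> \<bar>e\<bar> * K" "\<bar>\<mu> - lam j\<bar> \<le> \<bar>e\<bar> * K" for \<mu> i j
    using sep_le_eigval_diff[of i j] that small sep_pos by fastforce
  define g where "g \<mu> = (THE i. \<bar>\<mu> - lam i\<bar> \<le> \<bar>e\<bar> * K)" for \<mu>
  have near: "\<bar>\<mu> - lam (g \<mu>)\<bar> \<le> \<bar>e\<bar> * K" if "\<mu> \<in> S" for \<mu>
  proof -
    obtain x where "norm x = 1" "perturbed e *v x = \<mu> *\<^sub>R x"
      using eigvals_unit_eigenvector \<open>\<mu> \<in> S\<close> unfolding S_def by blast
    then obtain i where i: "\<bar>\<mu> - lam i\<bar> \<le> \<bar>e\<bar> * K" using perturbed_eigval_near by blast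
    show ?thesis unfolding g_def by (rule theI[of _ i]) (use i index_unique in blast)+
  qed
  have "inj_on g S"
    by (rule inj_onI) (metis S_def near small perturbed_eigval_unique)
  moreover have "g ` S = UNIV"
    using card \<open>inj_on g S\<close> by (intro card_seteq) (simp_all add: S_def card_image)
  ultimately show thesis using near by (intro that[of g]) (simp_all add: S_def bij_betw_def)
qed

lemma eigvals_unperturbed: "eigvals L = range lam"
proof
  show "range lam \<subseteq> eigvals L"
    using eigenpair v_nonzero unfolding eigvals_def by blast
  show "eigvals L \<subseteq> range lam"
  proof
    fix \<mu> assume "\<mu> \<in> eigvals L"
    then obtain x where "norm x = 1" "perturbed 0 *v x = \<mu> *\<^sub>R x"
      using eigvals_unit_eigenvector by (metis perturbed_def add.right_neutral scale_zero_left)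
    then obtain i where "\<bar>\<mu> - lam i\<bar> \<le> \<bar>0\<bar> * K" using perturbed_eigval_near by blast
    then show "\<mu> \<in> range lam" by auto
  qed
qed

lemma eigenspace_simple:
  assumes "L *v z = lam i *\<^sub>R z"
  shows "z = (z \<bullet> v i) *\<^sub>R v i"
proof -
  have "z \<bullet> v j = 0" if "j \<noteq> i" for j
  proof -
    have "lam i * (z \<bullet> v j) = lam j * (z \<bullet> v j)"
      using symmetric_matrix_inner[OF L_symmetric, of z "v j"] assms eigenpair by simp
    then show ?thesis using simple that by (auto simp: inj_eq)
  qed
  then have "(\<Sum>j\<in>UNIV. (z \<bullet> v j) *\<^sub>R v j) = (\<Sum>j\<in>UNIV. if j = i then (z \<bullet> v i) *\<^sub>R v i else 0)"
    by (intro sum.cong) auto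
  then show ?thesis by (simp add: orthonormal_family_expansion[OF orthonormal])
qed

lemma kernel_of_common_null_vector:
  assumes "z \<noteq> 0" "L *v z = 0" "D *v z = 0" and "lam i = 0"
  shows "D *v v i = 0"
proof -
  have z: "z = (z \<bullet> v i) *\<^sub>R v i"
    using assms(2,4) by (intro eigenspace_simple) simp
  then have "z \<bullet> v i \<noteq> 0" using \<open>z \<noteq> 0\<close> by (metis scale_zero_left)
  moreover have "(z \<bullet> v i) *\<^sub>R (D *v v i) = 0"
    using assms(3) z by (metis matrix_vector_mult_scaleR)
  ultimately show ?thesis by simp
qed

lemma perturbed_eigval_zero:
  assumes "lam i = 0" "D *v v i = 0"
    and \<mu>: "\<mu> \<in> eigvals (perturbed e)" "\<bar>\<mu> - lam i\<bar> \<le> \<bar>e\<bar> * K"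
    and small: "\<bar>e\<bar> * K \<le> sep / 4"
  shows "\<mu> = 0"
proof -
  have "perturbed e *v v i = 0 *\<^sub>R v i"
    using assms(1,2) eigenpair by (simp add: perturbed_def matrix_vector_mult_add_rdistrib scaleR_matrix_vector_mult)
  then have "0 \<in> eigvals (perturbed e)"
    using v_nonzero unfolding eigvals_def by blast
  then show ?thesis
    using perturbed_eigval_unique[OF \<mu> _ _ small, of 0] assms(1) K_pos by simp
qed

lemma vn_term_perturbed_eigval:
  assumes M: "M > 0"
    and \<mu>: "\<mu> \<in> eigvals (perturbed e)" "\<bar>\<mu> - lam i\<bar> \<le> \<bar>e\<bar> * K"
    and small: "\<bar>e\<bar> * K \<le> sep / 4"
    and kernel: "lam i = 0 \<Longrightarrow> D *v v i = 0"
  shows "\<bar>vn_term M \<mu> - vn_term M (lam i) - e * (vn_term_deriv M (lam i) * shift i)\<bar>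
    \<le> (K^2 / (2 * real M * ln 2 * sep) + \<bar>vn_term_deriv M (lam i)\<bar> * (3 * K^2 / sep)) * e^2"
proof (cases "lam i = 0")
  case True
  then have "\<mu> = 0" "shift i = 0"
    using perturbed_eigval_zero[OF True kernel \<mu> small] kernel by (simp_all add: shift_def)
  then show ?thesis
    using True M K_pos sep_pos by (simp add: vn_term_def)
next
  case False
  define l where "l = lam i"
  have "sep \<le> \<bar>l\<bar>" using sep_le_eigval[OF False] by (simp add: l_def)
  then have "\<mu> * l > 0"
    using \<mu>(2) small sep_pos by (intro mult_pos_if_abs_diff_less) (simp add: l_def)
  then have "\<bar>vn_term M \<mu> - vn_term M l - vn_term_deriv M l * (\<mu> - l)\<bar>
      \<le> (\<mu> - l)^2 / (2 * real M * ln 2 * \<bar>l\<bar>)"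
    by (rule vn_term_linear_approx[OF M])
  also have "\<dots> \<le> (\<bar>e\<bar> * K)^2 / (2 * real M * ln 2 * sep)"
  proof -
    have "(\<mu> - l)^2 \<le> (\<bar>e\<bar> * K)^2"
      using power2_le_iff_abs_le[of "\<bar>e\<bar> * K" "\<mu> - l"] \<mu>(2) K_pos by (simp add: l_def)
    then show ?thesis using M \<open>sep \<le> \<bar>l\<bar>\<close> sep_pos by (intro frac_le) auto
  qed
  finally have linear: "\<bar>vn_term M \<mu> - vn_term M l - vn_term_deriv M l * (\<mu> - l)\<bar>
      \<le> K^2 / (2 * real M * ln 2 * sep) * e^2"
    by (simp add: power_mult_distrib mult_ac)
  obtain x where "norm x = 1" "perturbed e *v x = \<mu> *\<^sub>R x"
    using eigvals_unit_eigenvector[OF \<mu>(1)] .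
  then have "\<bar>\<mu> - l - e * shift i\<bar> \<le> 3 * e^2 * K^2 / sep"
    unfolding l_def by (intro perturbed_eigval_first_order \<mu>(2) small)
  then have "\<bar>vn_term_deriv M l\<bar> * \<bar>\<mu> - l - e * shift i\<bar> \<le> \<bar>vn_term_deriv M l\<bar> * (3 * e^2 * K^2 / sep)"
    by (metis abs_ge_zero mult_left_mono)
  then have first_order:
    "\<bar>vn_term_deriv M l * (\<mu> - l - e * shift i)\<bar> \<le> \<bar>vn_term_deriv M l\<bar> * (3 * K^2 / sep) * e^2"
    by (simp add: abs_mult mult_ac)
  have "vn_term M \<mu> - vn_term M l - e * (vn_term_deriv M l * shift i)
      = (vn_term M \<mu> - vn_term M l - vn_term_deriv M l * (\<mu> - l)) + vn_term_deriv M l * (\<mu> - l - e * shift i)"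
    by (simp add: algebra_simps)
  then show ?thesis using linear first_order unfolding l_def by (simp add: algebra_simps)
qed

lemma vn_entropy_perturbed_error:
  assumes M: "M > 0" and small: "\<bar>e\<bar> * K \<le> sep / 4"
    and card: "card (eigvals (perturbed e)) = CARD('n)"
    and kernel: "\<And>i. lam i = 0 \<Longrightarrow> D *v v i = 0"
  shows "\<bar>vn_entropy M (perturbed e) - vn_entropy M L - e * (- (\<Sum>i\<in>UNIV. vn_term_deriv M (lam i) * shift i))\<bar>
    \<le> (\<Sum>i\<in>UNIV. K^2 / (2 * real M * ln 2 * sep) + \<bar>vn_term_deriv M (lam i)\<bar> * (3 * K^2 / sep)) * e^2"
proof -
  define S where "S = eigvals (perturbed e)"
  define B where "B i = K^2 / (2 * real M * ln 2 * sep) + \<bar>vn_term_deriv M (lam i)\<bar> * (3 * K^2 / sep)" for i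
  define T where "T \<mu> i = vn_term M \<mu> - vn_term M (lam i) - e * (vn_term_deriv M (lam i) * shift i)" for \<mu> i
  obtain g where g: "bij_betw g S UNIV" "\<And>\<mu>. \<mu> \<in> S \<Longrightarrow> \<bar>\<mu> - lam (g \<mu>)\<bar> \<le> \<bar>e\<bar> * K"
    using perturbed_eigvals_matching[OF small card] unfolding S_def by blast
  have reindex: "(\<Sum>i\<in>UNIV. f i) = (\<Sum>\<mu>\<in>S. f (g \<mu>))" for f :: "'n \<Rightarrow> real"
    by (rule sum.reindex_bij_betw[OF g(1), symmetric])
  have "vn_entropy M L = - (\<Sum>i\<in>UNIV. vn_term M (lam i))"
    using simple by (simp add: vn_entropy_def eigvals_unperturbed sum.reindex)
  then have "vn_entropy M (perturbed e) - vn_entropy M L - e * (- (\<Sum>i\<in>UNIV. vn_term_deriv M (lam i) * shift i))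
      = - (\<Sum>\<mu>\<in>S. T \<mu> (g \<mu>))"
    by (simp add: vn_entropy_def S_def[symmetric] T_def reindex sum_subtractf sum_distrib_left)
  also have "\<bar>\<dots>\<bar> \<le> (\<Sum>\<mu>\<in>S. B (g \<mu>) * e^2)"
    unfolding abs_minus_cancel T_def B_def using g(2)
    by (intro order_trans[OF sum_abs] sum_mono vn_term_perturbed_eigval[OF M _ _ small kernel])
      (auto simp: S_def)
  also have "\<dots> = (\<Sum>i\<in>UNIV. B i * e^2)"
    by (rule reindex[symmetric])
  finally show ?thesis by (simp add: B_def sum_distrib_right)
qed

theorem vn_entropy_perturbed_expansion:
  assumes card: "\<forall>\<^sub>F e in nhds 0. card (eigvals (perturbed e)) = CARD('n)"
    and kernel: "\<And>i. lam i = 0 \<Longrightarrow> D *v v i = 0"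
  shows "(\<lambda>e. vn_entropy M (perturbed e) - vn_entropy M L
            - e * (- (1 / (2 * real M)) *
                   (\<Sum>i\<in>UNIV. shift i * (log 2 (lam i / (2 * real M)) + 1 / ln 2))))
         \<in> O[at 0](\<lambda>e. e^2)"
proof -
  have slope: "- (1 / (2 * real M)) * (\<Sum>i\<in>UNIV. shift i * (log 2 (lam i / (2 * real M)) + 1 / ln 2))
      = - (\<Sum>i\<in>UNIV. vn_term_deriv M (lam i) * shift i)"
    by (simp add: vn_term_deriv_def sum_distrib_left sum_negf mult_ac)
  have "(\<lambda>e. vn_entropy M (perturbed e) - vn_entropy M L
            - e * (- (\<Sum>i\<in>UNIV. vn_term_deriv M (lam i) * shift i))) \<in> O[at 0](\<lambda>e. e^2)"
  proof (cases "M = 0")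
    case True
    then have "vn_term M x = 0" "vn_term_deriv M x = 0" for x
      by (simp_all add: vn_term_def vn_term_deriv_def)
    then show ?thesis by (simp add: vn_entropy_def)
  next
    case False
    define C where
      "C = (\<Sum>i\<in>UNIV. K^2 / (2 * real M * ln 2 * sep) + \<bar>vn_term_deriv M (lam i)\<bar> * (3 * K^2 / sep))"
    have "\<forall>\<^sub>F e in nhds 0. \<bar>e\<bar> * K \<le> sep / 4"
      using sep_pos K_pos unfolding eventually_nhds_metric
      by (intro exI[of _ "sep / 4 / K"]) (auto simp: dist_real_def field_simps)
    then have "\<forall>\<^sub>F e in nhds 0. norm (vn_entropy M (perturbed e) - vn_entropy M L
        - e * (- (\<Sum>i\<in>UNIV. vn_term_deriv M (lam i) * shift i))) \<le> C * norm (e^2)"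
      using card by eventually_elim (use vn_entropy_perturbed_error False kernel in \<open>simp add: C_def\<close>)
    then show ?thesis
      by (intro bigoI) (auto simp: eventually_at_filter elim: eventually_mono)
  qed
  then show ?thesis unfolding slope .
qed

end

theorem corollary3p14:
  fixes E :: "'n::finite \<Rightarrow> 'n \<Rightarrow> bool"
    and Ep Em :: "('n \<times> 'n) set"
    and lam :: "'n \<Rightarrow> real"
    and v :: "'n \<Rightarrow> real^'n"
  assumes graph: "simple_graph E"
    and eig: "\<And>i. laplacian E *v v i = lam i *\<^sub>R v i"
    and orthonormal: "\<And>i j. v i \<bullet> v j = (if i = j then 1 else 0)"
    and simple: "inj lam"
    and Ep_new: "\<And>p q. (p, q) \<in> Ep \<Longrightarrow> p \<noteq> q \<and> \<not> E p q \<and> (q, p) \<notin> Ep"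
    and Em_old: "\<And>p q. (p, q) \<in> Em \<Longrightarrow> E p q \<and> (q, p) \<notin> Em"
    and simple_eps: "\<forall>\<^sub>F \<epsilon> in nhds 0.
        card (eigvals (laplacian E + \<epsilon> *\<^sub>R
           ((\<Sum>(p,q)\<in>Ep. deltaL p q) - (\<Sum>(p,q)\<in>Em. deltaL p q)))) = CARD('n)"
  shows "(\<lambda>\<epsilon>::real.
            vn_entropy (num_edges E) (laplacian E + \<epsilon> *\<^sub>R
                ((\<Sum>(p,q)\<in>Ep. deltaL p q) - (\<Sum>(p,q)\<in>Em. deltaL p q)))
          - vn_entropy (num_edges E) (laplacian E)
          - \<epsilon> * (- (1 / (2 * real (num_edges E))) *
               (\<Sum>i\<in>UNIV. ((\<Sum>(p,q)\<in>Ep. (v i $ p - v i $ q)^2)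
                           - (\<Sum>(p,q)\<in>Em. (v i $ p - v i $ q)^2))
                         * (log 2 (lam i / (2 * real (num_edges E))) + 1 / ln 2))))
         \<in> O[at 0](\<lambda>\<epsilon>. \<epsilon>^2)"
proof -
  define D where "D = (\<Sum>(p,q)\<in>Ep. deltaL p q) - (\<Sum>(p,q)\<in>Em. deltaL p q)"
  have Ep_loopless: "\<And>p q. (p, q) \<in> Ep \<Longrightarrow> p \<noteq> q" using Ep_new by blast
  have Em_loopless: "\<And>p q. (p, q) \<in> Em \<Longrightarrow> p \<noteq> q"
    using Em_old graph unfolding simple_graph_def by blast
  have "symp E" using graph unfolding simple_graph_def by (blast intro: sympI)
  moreover have "transpose D = D"
    by (simp add: D_def transpose_diff transpose_sum transpose_deltaL case_prod_unfold)
  ultimately interpret symmetric_perturbation "laplacian E" D lam v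
    using transpose_laplacian eig orthonormal simple by unfold_locales
  have "D *v (\<chi> i. 1) = 0"
    by (simp add: D_def matrix_vector_mult_diff_rdistrib deltaL_sum_mult_ones Ep_loopless Em_loopless)
  then have kernel: "\<And>i. lam i = 0 \<Longrightarrow> D *v v i = 0"
    using kernel_of_common_null_vector[OF _ laplacian_mult_ones] by (simp add: vec_eq_iff)
  have shift: "shift i = (\<Sum>(p,q)\<in>Ep. (v i $ p - v i $ q)^2) - (\<Sum>(p,q)\<in>Em. (v i $ p - v i $ q)^2)" for i
    unfolding shift_def unfolding D_def
    by (simp add: matrix_vector_mult_diff_rdistrib inner_diff_left deltaL_sum_quadratic_form
        Ep_loopless Em_loopless)
  have "\<forall>\<^sub>F e in nhds 0. card (eigvals (perturbed e)) = CARD('n)"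
    using simple_eps unfolding perturbed_def D_def[symmetric] .
  from vn_entropy_perturbed_expansion[OF this kernel, of "num_edges E", unfolded perturbed_def shift]
  show ?thesis unfolding D_def .
qed

end
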